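(* Let $0<\gamma<\frac n2$, $1\leq k<\frac n2-\gamma$, and let $\Sigma^{k+1}=\mathbb{H}^{k+1}/\pi$ be a closed hyperbolic manifold with Laplace eigenvalues $0=\lambda_0<\lambda_1\leq\lambda_2\leq\dots$ (repeated with multiplicity). For $m,\ell\in\mathbb{N}\cup\{0\}$ let $\mu_m=m(m+n-k-2)$, $a_m=\sqrt{\mu_m+(\frac{n-k-2}{2})^2}$, $b_\ell=\sqrt{\lambda_\ell-(\frac k2)^2}$ (with $b_\ell=i\sqrt{(\frac k2)^2-\lambda_\ell}$ if $\lambda_\ell<(\frac k2)^2$), and $$\Theta_{m,\ell}=4^\gamma\frac{\Gamma\big(\frac{1+\gamma}{2}+\frac{a_m+b_\ell i}{2}\big)}{\Gamma\big(\frac{1-\gamma}{2}+\frac{a_m+b_\ell i}{2}\big)}\,\frac{\Gamma\big(\frac{1+\gamma}{2}+\frac{a_m-b_\ell i}{2}\big)}{\Gamma\big(\frac{1-\gamma}{2}+\frac{a_m-b_\ell i}{2}\big)}.$$ Then $\Theta_{m+1,0}>\Theta_{m,0}$ and $\Theta_{m,\ell+1}\geq\Theta_{m,\ell}$ for all $m,\ell\in\mathbb{N}\cup\{0\}$.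
   Context: The numbers $\Theta_{m,\ell}$ are the (positive real) eigenvalues of the conformal fractional Laplacian of the product metric on $\mathbb{S}^{n-k-1}\times\Sigma^{k+1}$. *)

theory Defs
  imports "HOL-Analysis.Analysis"
begin

text \<open>mu_m = m (m + n - k - 2), eigenvalues of the sphere S^{n-k-1}.\<close>
definition mu_ev :: "nat \<Rightarrow> nat \<Rightarrow> nat \<Rightarrow> real" where
  "mu_ev n k m = real m * (real m + real n - real k - 2)"

definition a_coef :: "nat \<Rightarrow> nat \<Rightarrow> nat \<Rightarrow> real" where
  "a_coef n k m = sqrt (mu_ev n k m + ((real n - real k - 2) / 2)^2)"

definition b_coef :: "nat \<Rightarrow> real \<Rightarrow> complex" where
  "b_coef k lam = (if lam \<ge> (real k / 2)^2
      then complex_of_real (sqrt (lam - (real k / 2)^2))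
      else \<i> * complex_of_real (sqrt ((real k / 2)^2 - lam)))"

definition Theta :: "real \<Rightarrow> nat \<Rightarrow> nat \<Rightarrow> (nat \<Rightarrow> real) \<Rightarrow> nat \<Rightarrow> nat \<Rightarrow> complex" where
  "Theta \<gamma> n k lam m l =
     (let z1 = (complex_of_real (a_coef n k m) + b_coef k (lam l) * \<i>) / 2;
          z2 = (complex_of_real (a_coef n k m) - b_coef k (lam l) * \<i>) / 2
      in complex_of_real (4 powr \<gamma>)
         * (Gamma (complex_of_real ((1 + \<gamma>) / 2) + z1) / Gamma (complex_of_real ((1 - \<gamma>) / 2) + z1))
         * (Gamma (complex_of_real ((1 + \<gamma>) / 2) + z2) / Gamma (complex_of_real ((1 - \<gamma>) / 2) + z2)))"

end

theory Submission
  imports Defs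
begin

text \<open>
  Put \<open>x = (1 - \<gamma>)/2 + a\<^sub>m/2\<close> and \<open>w = i b\<^sub>l/2\<close>. Then \<open>w\<^sup>2 = -s\<close> with the real number
  \<open>s = (\<lambda>\<^sub>l - (k/2)\<^sup>2)/4\<close>, and \<open>\<Theta>\<^sub>m\<^sub>,\<^sub>l = 4\<^sup>\<gamma> \<Gamma>(x+\<gamma>+w) \<Gamma>(x+\<gamma>-w) / (\<Gamma>(x+w) \<Gamma>(x-w))\<close>.
  Euler's product for \<open>\<Gamma>\<close> writes this quotient as the limit of
  \<open>n\<^sup>2\<^sup>\<gamma> \<Prod>\<^sub>j\<^sub>\<le>\<^sub>n ((x+j)\<^sup>2 + s) / ((x+j+\<gamma>)\<^sup>2 + s)\<close>, a product of positive reals.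
  Every factor increases with \<open>s\<close>, which gives monotonicity in \<open>l\<close>. For \<open>s \<le> 0\<close>, which is the
  case \<open>l = 0\<close>, every factor also increases strictly with \<open>x\<close>; as \<open>x\<close> grows by \<open>1/2\<close> from
  \<open>m\<close> to \<open>m + 1\<close>, the first factor gains a fixed ratio \<open>c > 1\<close> that survives the limit.
\<close>

lemma square_plus_pos_mono:
  fixes x y s :: real
  assumes "0 \<le> x" "x \<le> y" "0 < x\<^sup>2 + s"
  shows "0 < y\<^sup>2 + s"
proof -
  have "x\<^sup>2 \<le> y\<^sup>2" using assms(1,2) by (intro power_mono)
  with assms(3) show ?thesis by linarith
qed

lemma pochhammer_conj_pair:
  fixes x s :: real and w :: complex
  assumes "w * w = - of_real s"
  shows "pochhammer (of_real x + w) m * pochhammer (of_real x - w) m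
         = of_real (\<Prod>j<m. (x + real j)\<^sup>2 + s)"
proof -
  have "(of_real x + w + of_nat j) * (of_real x - w + of_nat j) = of_real ((x + real j)\<^sup>2 + s)"
    for j :: nat
  proof -
    have "(of_real x + w + of_nat j) * (of_real x - w + of_nat j) = (of_real (x + real j))\<^sup>2 - w * w"
      by (simp add: algebra_simps power2_eq_square)
    with assms show ?thesis by simp
  qed
  then show ?thesis
    by (simp add: pochhammer_prod atLeast0LessThan flip: prod.distrib)
qed

lemma Gamma_conj_pair_nonzero:
  fixes x y s :: real and w :: complex
  assumes "0 < x" "x \<le> y" "w * w = - of_real s" "0 < x\<^sup>2 + s"
  shows "Gamma (of_real y + w) * Gamma (of_real y - w) \<noteq> 0"
proof -
  have not_pole: "of_real y + v \<notin> \<int>\<^sub>\<le>\<^sub>0" if "v * v = - of_real s" for v :: complex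
  proof
    assume "of_real y + v \<in> \<int>\<^sub>\<le>\<^sub>0"
    then obtain N where "of_real y + v = - of_nat N" by (elim nonpos_Ints_cases')
    then have v: "v = - of_real (real N + y)" by (simp add: algebra_simps)
    have "complex_of_real ((real N + y)\<^sup>2) = of_real (- s)"
      using that unfolding v by (simp add: power2_eq_square algebra_simps)
    then have "(real N + y)\<^sup>2 = - s"
      by (simp only: of_real_eq_iff)
    moreover have "0 < (real N + y)\<^sup>2 + s"
      by (rule square_plus_pos_mono[OF _ _ assms(4)]) (use assms(1,2) in auto)
    ultimately show False by linarith
  qed
  show ?thesis
    using not_pole[OF assms(3)] not_pole[of "- w"] assms(3) by (simp add: Gamma_eq_zero_iff)
qed

lemma Gamma_series_conj_pair:
  fixes x s :: real and w :: complex
  assumes "w * w = - of_real s" "0 < n"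
  shows "Gamma_series (of_real x + w) n * Gamma_series (of_real x - w) n
         = of_real ((fact n)\<^sup>2 * real n powr (2 * x) / (\<Prod>j\<le>n. (x + real j)\<^sup>2 + s))"
proof -
  define L where "L = complex_of_real (ln (real n))"
  have "exp ((of_real x + w) * L) * exp ((of_real x - w) * L) = exp (of_real (2 * x * ln (real n)))"
    by (simp add: L_def algebra_simps flip: exp_add)
  also have "\<dots> = of_real (real n powr (2 * x))"
    using assms(2) by (simp only: exp_of_real) (simp add: powr_def mult_ac)
  finally have exps: "exp ((of_real x + w) * L) * exp ((of_real x - w) * L) = of_real (real n powr (2 * x))" .
  have pochs: "pochhammer (of_real x + w) (Suc n) * pochhammer (of_real x - w) (Suc n)
      = of_real (\<Prod>j\<le>n. (x + real j)\<^sup>2 + s)"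
    using pochhammer_conj_pair[OF assms(1)] by (simp add: lessThan_Suc_atMost)
  have "Gamma_series (of_real x + w) n * Gamma_series (of_real x - w) n
      = (fact n * fact n) * (exp ((of_real x + w) * L) * exp ((of_real x - w) * L))
        / (pochhammer (of_real x + w) (Suc n) * pochhammer (of_real x - w) (Suc n))"
    unfolding Gamma_series_def L_def times_divide_times_eq by (simp add: ac_simps)
  also have "\<dots> = of_real ((fact n)\<^sup>2 * real n powr (2 * x) / (\<Prod>j\<le>n. (x + real j)\<^sup>2 + s))"
    unfolding exps pochs by (simp add: power2_eq_square)
  finally show ?thesis .
qed

definition pair_factor :: "real \<Rightarrow> real \<Rightarrow> real \<Rightarrow> real" where
  "pair_factor g s x = (x\<^sup>2 + s) / ((x + g)\<^sup>2 + s)"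

lemma pair_factor_pos:
  assumes "0 \<le> x" "0 \<le> g" "0 < x\<^sup>2 + s"
  shows "0 < pair_factor g s x"
  unfolding pair_factor_def
  by (rule divide_pos_pos[OF assms(3)], rule square_plus_pos_mono[OF _ _ assms(3)]) (use assms in auto)

lemma pair_factor_mono_s:
  assumes "0 \<le> x" "0 \<le> g" "0 < x\<^sup>2 + s" "s \<le> s'"
  shows "pair_factor g s x \<le> pair_factor g s' x"
proof -
  have "x\<^sup>2 \<le> (x + g)\<^sup>2" using assms(1,2) by (intro power_mono) auto
  have "(x\<^sup>2 + s') * ((x + g)\<^sup>2 + s) - (x\<^sup>2 + s) * ((x + g)\<^sup>2 + s')
      = (s' - s) * ((x + g)\<^sup>2 - x\<^sup>2)"
    by (simp add: algebra_simps)
  also have "\<dots> \<ge> 0"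
    using \<open>x\<^sup>2 \<le> (x + g)\<^sup>2\<close> assms(4) by simp
  finally have "(x\<^sup>2 + s) * ((x + g)\<^sup>2 + s') \<le> (x\<^sup>2 + s') * ((x + g)\<^sup>2 + s)" by simp
  moreover have "0 < (x + g)\<^sup>2 + s" "0 < (x + g)\<^sup>2 + s'"
    using \<open>x\<^sup>2 \<le> (x + g)\<^sup>2\<close> assms(3,4) by linarith+
  ultimately show ?thesis
    unfolding pair_factor_def by (simp add: divide_simps)
qed

lemma pair_factor_strict_mono:
  assumes "0 < x" "x < y" "0 < g" "s \<le> 0" "0 < x\<^sup>2 + s"
  shows "pair_factor g s x < pair_factor g s y"
proof -
  have "(y\<^sup>2 + s) * ((x + g)\<^sup>2 + s) - (x\<^sup>2 + s) * ((y + g)\<^sup>2 + s)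
      = g * (y - x) * (2 * x * y - 2 * s + g * (x + y))"
    by (simp add: algebra_simps power2_eq_square)
  also have "\<dots> > 0"
  proof -
    have "0 < 2 * x * y" "0 < g * (x + y)" using assms(1-3) by auto
    then have "0 < 2 * x * y - 2 * s + g * (x + y)" using assms(4) by linarith
    with assms show ?thesis by (intro mult_pos_pos) auto
  qed
  finally have "(x\<^sup>2 + s) * ((y + g)\<^sup>2 + s) < (y\<^sup>2 + s) * ((x + g)\<^sup>2 + s)" by simp
  moreover have "0 < (x + g)\<^sup>2 + s" "0 < (y + g)\<^sup>2 + s"
    using assms by (auto intro: square_plus_pos_mono[OF _ _ assms(5)])
  ultimately show ?thesis
    unfolding pair_factor_def by (simp add: divide_simps)
qed

definition gauss_pair_ratio :: "real \<Rightarrow> real \<Rightarrow> real \<Rightarrow> nat \<Rightarrow> real" where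
  "gauss_pair_ratio g s x n = real n powr (2 * g) * (\<Prod>j\<le>n. pair_factor g s (x + real j))"

definition gamma_pair_ratio :: "real \<Rightarrow> complex \<Rightarrow> real \<Rightarrow> complex" where
  "gamma_pair_ratio g w x =
     Gamma (of_real (x + g) + w) * Gamma (of_real (x + g) - w) / (Gamma (of_real x + w) * Gamma (of_real x - w))"

lemma gauss_pair_ratio_eq_Gamma_series:
  fixes g s x :: real and w :: complex
  assumes "0 < x" "0 \<le> g" "w * w = - of_real s" "0 < x\<^sup>2 + s" "0 < n"
  shows "of_real (gauss_pair_ratio g s x n)
         = Gamma_series (of_real (x + g) + w) n * Gamma_series (of_real (x + g) - w) n
           / (Gamma_series (of_real x + w) n * Gamma_series (of_real x - w) n)"
proof -
  have prod_pos: "0 < (\<Prod>j\<le>n. (y + real j)\<^sup>2 + s)" if "x \<le> y" for y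
    using that assms(1,4) by (intro prod_pos ballI square_plus_pos_mono[OF _ _ assms(4)]) auto
  have "((fact n)\<^sup>2 * real n powr (2 * (x + g)) / (\<Prod>j\<le>n. (x + g + real j)\<^sup>2 + s))
        / ((fact n)\<^sup>2 * real n powr (2 * x) / (\<Prod>j\<le>n. (x + real j)\<^sup>2 + s))
      = (real n powr (2 * (x + g)) / real n powr (2 * x))
        * ((\<Prod>j\<le>n. (x + real j)\<^sup>2 + s) / (\<Prod>j\<le>n. (x + g + real j)\<^sup>2 + s))"
    (is "?ratio = _")
    using prod_pos[of x] prod_pos[of "x + g"] assms(2,5) by (simp add: field_simps)
  also have "\<dots> = gauss_pair_ratio g s x n"
    unfolding gauss_pair_ratio_def pair_factor_def
    by (simp add: algebra_simps flip: powr_diff prod_dividef)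
  finally have "?ratio = gauss_pair_ratio g s x n" .
  then show ?thesis
    by (simp only: Gamma_series_conj_pair[OF assms(3,5)] flip: of_real_divide)
qed

lemma gauss_pair_ratio_LIMSEQ:
  fixes g s x :: real and w :: complex
  assumes "0 < x" "0 \<le> g" "w * w = - of_real s" "0 < x\<^sup>2 + s"
  shows "(\<lambda>n. complex_of_real (gauss_pair_ratio g s x n)) \<longlonglongrightarrow> gamma_pair_ratio g w x"
proof -
  have "Gamma (of_real x + w) * Gamma (of_real x - w) \<noteq> 0"
    using Gamma_conj_pair_nonzero[OF assms(1) order_refl assms(3,4)] .
  then have "(\<lambda>n. Gamma_series (of_real (x + g) + w) n * Gamma_series (of_real (x + g) - w) n
      / (Gamma_series (of_real x + w) n * Gamma_series (of_real x - w) n)) \<longlonglongrightarrow> gamma_pair_ratio g w x"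
    unfolding gamma_pair_ratio_def by (intro tendsto_intros)
  then show ?thesis
    by (rule Lim_transform_eventually)
       (use gauss_pair_ratio_eq_Gamma_series[OF assms] in \<open>auto intro: eventually_sequentiallyI[of 1]\<close>)
qed

lemma gauss_pair_ratio_LIMSEQ_Re:
  fixes g s x :: real and w :: complex
  assumes "0 < x" "0 \<le> g" "w * w = - of_real s" "0 < x\<^sup>2 + s"
  shows "gauss_pair_ratio g s x \<longlonglongrightarrow> Re (gamma_pair_ratio g w x)"
  using tendsto_Re[OF gauss_pair_ratio_LIMSEQ[OF assms]] by simp

lemma gauss_pair_ratio_nonneg:
  assumes "0 \<le> x" "0 \<le> g" "0 < x\<^sup>2 + s"
  shows "0 \<le> gauss_pair_ratio g s x n"
proof -
  have "0 < pair_factor g s (x + real j)" for j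
    by (rule pair_factor_pos) (use assms square_plus_pos_mono[OF _ _ assms(3)] in auto)
  then show ?thesis
    unfolding gauss_pair_ratio_def by (simp add: less_imp_le prod_nonneg)
qed

lemma Re_gamma_pair_ratio_pos:
  fixes g s x :: real and w :: complex
  assumes "0 < x" "0 \<le> g" "w * w = - of_real s" "0 < x\<^sup>2 + s"
  shows "0 < Re (gamma_pair_ratio g w x)"
proof -
  let ?G = "gamma_pair_ratio g w x"
  note lim = gauss_pair_ratio_LIMSEQ_Re[OF assms]
  have "?G = of_real (Re ?G)"
    using gauss_pair_ratio_LIMSEQ[OF assms] tendsto_of_real[OF lim] by (rule LIMSEQ_unique)
  moreover have "?G \<noteq> 0"
    using Gamma_conj_pair_nonzero[OF assms(1) _ assms(3,4), of x]
      Gamma_conj_pair_nonzero[OF assms(1) _ assms(3,4), of "x + g"] assms(2)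
    unfolding gamma_pair_ratio_def by simp
  ultimately have "Re ?G \<noteq> 0" by (metis of_real_0)
  moreover have "0 \<le> Re ?G"
    using lim by (rule LIMSEQ_le_const) (use assms gauss_pair_ratio_nonneg in auto)
  ultimately show ?thesis by simp
qed

lemma gauss_pair_ratio_mono_s:
  assumes "0 \<le> x" "0 \<le> g" "0 < x\<^sup>2 + s" "s \<le> s'"
  shows "gauss_pair_ratio g s x n \<le> gauss_pair_ratio g s' x n"
proof -
  have "0 < (x + real j)\<^sup>2 + s" for j
    by (rule square_plus_pos_mono[OF _ _ assms(3)]) (use assms(1) in auto)
  then show ?thesis
    unfolding gauss_pair_ratio_def using assms
    by (intro mult_left_mono prod_mono conjI less_imp_le[OF pair_factor_pos] pair_factor_mono_s) auto
qed

lemma gauss_pair_ratio_shift_ge: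
  assumes "0 < x" "x < y" "0 < g" "s \<le> 0" "0 < x\<^sup>2 + s"
  shows "pair_factor g s y / pair_factor g s x * gauss_pair_ratio g s x n \<le> gauss_pair_ratio g s y n"
proof -
  let ?f = "pair_factor g s" and ?J = "{..n} - {0}"
  have pos: "0 < ?f z" if "x \<le> z" for z
    using that assms by (intro pair_factor_pos square_plus_pos_mono[OF _ _ assms(5)]) auto
  have split: "(\<Prod>j\<le>n. ?f (z + real j)) = ?f z * (\<Prod>j\<in>?J. ?f (z + real j))" for z
    by (subst prod.remove[of _ 0]) auto
  have "(\<Prod>j\<in>?J. ?f (x + real j)) \<le> (\<Prod>j\<in>?J. ?f (y + real j))"
    using assms pos by (intro prod_mono conjI less_imp_le[OF pos] less_imp_le[OF pair_factor_strict_mono]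
        square_plus_pos_mono[OF _ _ assms(5)]) auto
  then have "real n powr (2 * g) * (?f y * (\<Prod>j\<in>?J. ?f (x + real j)))
      \<le> real n powr (2 * g) * (?f y * (\<Prod>j\<in>?J. ?f (y + real j)))"
    using pos[of y] assms(2) by (simp add: mult_left_mono)
  moreover have "?f y / ?f x * gauss_pair_ratio g s x n
      = real n powr (2 * g) * (?f y * (\<Prod>j\<in>?J. ?f (x + real j)))"
    unfolding gauss_pair_ratio_def split using pos[of x] by simp
  ultimately show ?thesis
    unfolding gauss_pair_ratio_def split[of y] by simp
qed

lemma Re_gamma_pair_ratio_mono_s:
  fixes g s s' x :: real and w w' :: complex
  assumes "0 < x" "0 \<le> g" "0 < x\<^sup>2 + s" "s \<le> s'"
    and "w * w = - of_real s" "w' * w' = - of_real s'"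
  shows "Re (gamma_pair_ratio g w x) \<le> Re (gamma_pair_ratio g w' x)"
proof (rule LIMSEQ_le)
  show "gauss_pair_ratio g s x \<longlonglongrightarrow> Re (gamma_pair_ratio g w x)"
    using assms by (intro gauss_pair_ratio_LIMSEQ_Re) auto
  show "gauss_pair_ratio g s' x \<longlonglongrightarrow> Re (gamma_pair_ratio g w' x)"
    using assms by (intro gauss_pair_ratio_LIMSEQ_Re) auto
  show "\<exists>N. \<forall>n\<ge>N. gauss_pair_ratio g s x n \<le> gauss_pair_ratio g s' x n"
    using gauss_pair_ratio_mono_s[of x g s s'] assms by auto
qed

lemma Re_gamma_pair_ratio_strict_mono:
  fixes g s x y :: real and w :: complex
  assumes "0 < x" "x < y" "0 < g" "s \<le> 0" "0 < x\<^sup>2 + s" "w * w = - of_real s"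
  shows "Re (gamma_pair_ratio g w x) < Re (gamma_pair_ratio g w y)"
proof -
  define c where "c = pair_factor g s y / pair_factor g s x"
  have "1 < c"
    unfolding c_def using assms pair_factor_strict_mono[OF assms(1-5)]
    by (subst less_divide_eq_1_pos) (auto intro: pair_factor_pos)
  have "c * Re (gamma_pair_ratio g w x) \<le> Re (gamma_pair_ratio g w y)"
  proof (rule LIMSEQ_le)
    show "(\<lambda>n. c * gauss_pair_ratio g s x n) \<longlonglongrightarrow> c * Re (gamma_pair_ratio g w x)"
      using assms by (intro tendsto_mult_left gauss_pair_ratio_LIMSEQ_Re) auto
    have "0 < y\<^sup>2 + s" using assms by (intro square_plus_pos_mono[OF _ _ assms(5)]) auto
    then show "gauss_pair_ratio g s y \<longlonglongrightarrow> Re (gamma_pair_ratio g w y)"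
      using assms by (intro gauss_pair_ratio_LIMSEQ_Re) auto
    show "\<exists>N. \<forall>n\<ge>N. c * gauss_pair_ratio g s x n \<le> gauss_pair_ratio g s y n"
      using gauss_pair_ratio_shift_ge[OF assms(1-5)] unfolding c_def by blast
  qed
  moreover have "0 < Re (gamma_pair_ratio g w x)"
    using assms by (intro Re_gamma_pair_ratio_pos) auto
  with \<open>1 < c\<close> have "Re (gamma_pair_ratio g w x) < c * Re (gamma_pair_ratio g w x)"
    by simp
  ultimately show ?thesis by linarith
qed

lemma b_coef_half_i_sq:
  "(b_coef k lam * \<i> / 2) * (b_coef k lam * \<i> / 2) = - of_real ((lam - (real k / 2)\<^sup>2) / 4)"
proof -
  have "b_coef k lam * b_coef k lam = of_real (lam - (real k / 2)\<^sup>2)"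
  proof (cases "(real k / 2)\<^sup>2 \<le> lam")
    case True
    then show ?thesis
      unfolding b_coef_def by (simp flip: of_real_mult)
  next
    case False
    define t where "t = (real k / 2)\<^sup>2 - lam"
    have "b_coef k lam = \<i> * of_real (sqrt t)"
      using False unfolding b_coef_def t_def by simp
    then have "b_coef k lam * b_coef k lam = (\<i> * \<i>) * of_real (sqrt t * sqrt t)"
      by (simp only: of_real_mult mult_ac)
    also have "\<dots> = of_real (- t)"
      using False by (simp add: t_def)
    finally show ?thesis
      by (simp add: t_def)
  qed
  then show ?thesis
    by (simp add: field_simps)
qed

lemma a_coef_eq:
  assumes "k + 2 \<le> n"
  shows "a_coef n k m = real m + (real n - real k - 2) / 2"
proof -
  have "mu_ev n k m + ((real n - real k - 2) / 2)\<^sup>2 = (real m + (real n - real k - 2) / 2)\<^sup>2"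
    unfolding mu_ev_def by (simp add: power2_eq_square algebra_simps)
  then show ?thesis
    unfolding a_coef_def using assms by simp
qed

lemma Theta_eq_gamma_pair_ratio:
  "Theta \<gamma> n k lam m l = of_real (4 powr \<gamma>)
     * gamma_pair_ratio \<gamma> (b_coef k (lam l) * \<i> / 2) ((1 - \<gamma>) / 2 + a_coef n k m / 2)"
proof -
  let ?x = "(1 - \<gamma>) / 2 + a_coef n k m / 2" and ?w = "b_coef k (lam l) * \<i> / 2"
  have args: "complex_of_real ((1 + \<gamma>) / 2) + (of_real (a_coef n k m) + b_coef k (lam l) * \<i>) / 2 = of_real (?x + \<gamma>) + ?w"
    "complex_of_real ((1 - \<gamma>) / 2) + (of_real (a_coef n k m) + b_coef k (lam l) * \<i>) / 2 = of_real ?x + ?w"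
    "complex_of_real ((1 + \<gamma>) / 2) + (of_real (a_coef n k m) - b_coef k (lam l) * \<i>) / 2 = of_real (?x + \<gamma>) - ?w"
    "complex_of_real ((1 - \<gamma>) / 2) + (of_real (a_coef n k m) - b_coef k (lam l) * \<i>) / 2 = of_real ?x - ?w"
    by (simp_all add: field_simps)
  show ?thesis
    unfolding Theta_def gamma_pair_ratio_def Let_def args by (simp only: times_divide_times_eq mult.assoc)
qed

lemma Theta_args_pos:
  fixes \<gamma> \<mu> :: real
  assumes "k + 2 \<le> n" "real k < real n / 2 - \<gamma>" "0 \<le> \<mu>"
  shows "0 < (1 - \<gamma>) / 2 + a_coef n k m / 2"
    and "0 < ((1 - \<gamma>) / 2 + a_coef n k m / 2)\<^sup>2 + (\<mu> - (real k / 2)\<^sup>2) / 4"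
proof -
  have gt: "real k / 4 < (1 - \<gamma>) / 2 + a_coef n k m / 2"
    using assms(1,2) by (simp add: a_coef_eq field_simps)
  then show "0 < (1 - \<gamma>) / 2 + a_coef n k m / 2"
    using of_nat_0_le_iff[of k] by linarith
  have "(real k / 4)\<^sup>2 < ((1 - \<gamma>) / 2 + a_coef n k m / 2)\<^sup>2"
    using gt by (intro power_strict_mono) auto
  moreover have "(\<mu> - (real k / 2)\<^sup>2) / 4 = \<mu> / 4 - (real k / 4)\<^sup>2"
    by (simp add: power_divide)
  ultimately show "0 < ((1 - \<gamma>) / 2 + a_coef n k m / 2)\<^sup>2 + (\<mu> - (real k / 2)\<^sup>2) / 4"
    using assms(3) by linarith
qed

theorem proposition3p8:
  fixes \<gamma> :: real and n k :: nat and lam :: "nat \<Rightarrow> real"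
  assumes "0 < \<gamma>" and "\<gamma> < real n / 2"
    and "1 \<le> k" and "real k < real n / 2 - \<gamma>"
    and "lam 0 = 0" and "0 < lam 1" and "mono lam"
  shows "(\<forall>m. Re (Theta \<gamma> n k lam (Suc m) 0) > Re (Theta \<gamma> n k lam m 0)) \<and>
         (\<forall>m l. Re (Theta \<gamma> n k lam m (Suc l)) \<ge> Re (Theta \<gamma> n k lam m l))"
proof -
  define x where "x m = (1 - \<gamma>) / 2 + a_coef n k m / 2" for m
  define w where "w l = b_coef k (lam l) * \<i> / 2" for l
  define s where "s l = (lam l - (real k / 2)\<^sup>2) / 4" for l
  have Re_Theta: "Re (Theta \<gamma> n k lam m l) = 4 powr \<gamma> * Re (gamma_pair_ratio \<gamma> (w l) (x m))" for m l
    by (simp add: Theta_eq_gamma_pair_ratio x_def w_def)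
  have w_sq: "w l * w l = - of_real (s l)" for l
    unfolding w_def s_def by (rule b_coef_half_i_sq)
  have "real (2 * k) < real n" using assms(1,4) by simp
  with assms(3) have "k + 2 \<le> n" by linarith
  moreover have "0 \<le> lam l" for l
    using assms(5,7) by (metis le0 monoD)
  ultimately have x_pos: "0 < x m" and x_s_pos: "0 < (x m)\<^sup>2 + s l" for m l
    unfolding x_def s_def using assms(4) by (auto intro: Theta_args_pos)
  have x_Suc: "x (Suc m) = x m + 1 / 2" for m
    using \<open>k + 2 \<le> n\<close> by (simp add: x_def a_coef_eq field_simps)
  show ?thesis
  proof (intro conjI allI)
    fix m
    have "s 0 \<le> 0" by (simp add: s_def assms(5))
    then show "Re (Theta \<gamma> n k lam (Suc m) 0) > Re (Theta \<gamma> n k lam m 0)"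
      unfolding Re_Theta using x_pos x_s_pos w_sq assms(1)
      by (simp add: Re_gamma_pair_ratio_strict_mono x_Suc)
  next
    fix m l
    have "s l \<le> s (Suc l)" using assms(7) by (simp add: s_def monoD)
    then show "Re (Theta \<gamma> n k lam m (Suc l)) \<ge> Re (Theta \<gamma> n k lam m l)"
      unfolding Re_Theta
      using Re_gamma_pair_ratio_mono_s[OF x_pos _ x_s_pos _ w_sq w_sq] assms(1) by simp
  qed
qed

end
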